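(* (i) For integers $k\ge1$, $m\ge0$, the Jones polynomial of the Montesinos link $M_{[k[\frac25],m[\frac12]]}$ (with any orientation) satisfies $$V_{M_{[k[\frac25],m[\frac12]]}}(t)\ \doteq\ (1+t^2)(1-t^2)^{k-1}(1-t)^m .$$ (ii) If additionally $k+m\ge2$, then $V_{M_{[k[\frac25],m[\frac12]]}}(t)\doteq(1+t)^{k-1}(1-t)^{k+m-2}$.
   Context: Conway notation for 2-tangles: $[\frac pq]$ is the rational tangle with fraction $p/q$; the numerator $T^N$ joins NW–NE and SW–SE outside the ball; $T_A*T_B$ places $T_A$ left of $T_B$ joining NE of $T_A$ to NW of $T_B$ and SE to SW. $M_{[k[\frac25],m[\frac12]]}=([\frac25]*\cdots*[\frac25]*[\frac12]*\cdots*[\frac12])^N$ with $k$ factors $[\frac25]$ and $m$ factors $[\frac12]$. Let $I_t$ be the ideal of $\mathbb Z[t^{\pm1/2}]$ generated by $\frac{t^5+1}{t+1}=t^4-t^3+t^2-t+1$. For $f,g\in\mathbb Z[t^{\pm1/2}]$ write $f\doteq g$ if $f\equiv \pm t^{i/2}g \pmod{I_t}$ for some sign and some integer $i$. *)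

theory Defs
  imports "HOL-Computational_Algebra.Formal_Laurent_Series"
begin

text \<open>Elements of Z[t^(+-1/2)] are represented as integer formal Laurent series
  with finite support in the variable fls_X, which stands for t^(1/2).\<close>

definition laurent_poly :: "int fls \<Rightarrow> bool" where
  "laurent_poly f \<longleftrightarrow> finite {i. fls_nth f i \<noteq> 0}"

definition tvar :: "int fls" where
  "tvar = fls_X ^ 2"

definition phi10 :: "int fls" where
  "phi10 = tvar ^ 4 - tvar ^ 3 + tvar ^ 2 - tvar + 1"  \<comment> \<open>(t^5+1)/(t+1)\<close>

definition in_It :: "int fls \<Rightarrow> bool" where
  "in_It f \<longleftrightarrow> (\<exists>h. laurent_poly h \<and> f = h * phi10)"

definition doteq :: "int fls \<Rightarrow> int fls \<Rightarrow> bool" where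
  "doteq f g \<longleftrightarrow> (\<exists>\<epsilon>\<in>{1, -1}. \<exists>i::int. in_It (f - \<epsilon> * fls_X_intpow i * g))"

text \<open>Every crossing is a translate of the elementary tangle [1]: its four ends are
  the corners NW, NE, SW, SE; the strands are NW--SE (over strand) and NE--SW
  (under strand).\<close>

datatype corner = NW | NE | SW | SE

type_synonym slot = "nat \<times> corner"

record tdiag =
  ncr   :: nat
  arcs  :: "(slot \<times> slot) set"
  bnw   :: slot
  bne   :: slot
  bsw   :: slot
  bse   :: slot

text \<open>Algebraic tangle expressions built from [1] by the tangle sum T*S
  (T left of S, NE of T joined to NW of S, SE of T to SW of S) and the vertical
  sum (T above S, SW of T joined to NW of S, SE of T to NE of S).\<close>
datatype ctangle = One | TSum ctangle ctangle | VSum ctangle ctangle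

definition shift_slot :: "nat \<Rightarrow> slot \<Rightarrow> slot" where
  "shift_slot k s = (fst s + k, snd s)"

fun tdiag_of :: "ctangle \<Rightarrow> tdiag" where
  "tdiag_of One = \<lparr>ncr = 1, arcs = {}, bnw = (0, NW), bne = (0, NE), bsw = (0, SW), bse = (0, SE)\<rparr>"
| "tdiag_of (TSum T S) =
     (let A = tdiag_of T; B = tdiag_of S; k = ncr A; f = shift_slot k in
      \<lparr>ncr = k + ncr B,
       arcs = arcs A \<union> map_prod f f ` arcs B \<union> {(bne A, f (bnw B)), (bse A, f (bsw B))},
       bnw = bnw A, bne = f (bne B), bsw = bsw A, bse = f (bse B)\<rparr>)"
| "tdiag_of (VSum T S) =
     (let A = tdiag_of T; B = tdiag_of S; k = ncr A; f = shift_slot k in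
      \<lparr>ncr = k + ncr B,
       arcs = arcs A \<union> map_prod f f ` arcs B \<union> {(bsw A, f (bnw B)), (bse A, f (bne B))},
       bnw = bnw A, bne = bne A, bsw = f (bsw B), bse = f (bse B)\<rparr>)"

text \<open>Integer tangle [n] = [1]*...*[1] (fraction n) and [1/n] = vertical stack of
  n copies of [1] (fraction 1/n).  Since 1/F is additive under vertical sum,
  [2/5] = [1/2] stacked above [2]  (5/2 = 2 + 1/2).\<close>
definition rat_1_2 :: ctangle where "rat_1_2 = VSum One One"
definition rat_2_5 :: ctangle where "rat_2_5 = VSum (VSum One One) (TSum One One)"

fun tsum_list :: "ctangle list \<Rightarrow> ctangle" where
  "tsum_list [] = One"   \<comment> \<open>never used for nonempty lists\<close>
| "tsum_list [T] = T"
| "tsum_list (T # Ts) = TSum T (tsum_list Ts)"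

type_synonym ldiag = "nat \<times> (slot \<times> slot) set"

definition numerator :: "ctangle \<Rightarrow> ldiag" where
  "numerator T = (let D = tdiag_of T in
     (ncr D, arcs D \<union> {(bnw D, bne D), (bsw D, bse D)}))"

definition montesinos_2_5_1_2 :: "nat \<Rightarrow> nat \<Rightarrow> ldiag" where
  "montesinos_2_5_1_2 k m = numerator (tsum_list (replicate k rat_2_5 @ replicate m rat_1_2))"

text \<open>An orientation: ori s = True iff the strand enters the crossing at end s.\<close>
definition is_orientation :: "ldiag \<Rightarrow> (slot \<Rightarrow> bool) \<Rightarrow> bool" where
  "is_orientation D ori \<longleftrightarrow>
     (\<forall>i<fst D. ori (i, NW) \<noteq> ori (i, SE) \<and> ori (i, NE) \<noteq> ori (i, SW)) \<and>
     (\<forall>(x, y)\<in>snd D. ori x \<noteq> ori y)"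

definition writhe :: "ldiag \<Rightarrow> (slot \<Rightarrow> bool) \<Rightarrow> int" where
  "writhe D ori = (\<Sum>i<fst D. if ori (i, NW) \<noteq> ori (i, NE) then 1 else -1)"

text \<open>A-smoothing (crossings in S) joins NW-NE and SW-SE; B-smoothing joins NW-SW and NE-SE.\<close>
definition smoothing :: "nat set \<Rightarrow> nat \<Rightarrow> (slot \<times> slot) set" where
  "smoothing S i = (if i \<in> S then {((i, NW), (i, NE)), ((i, SW), (i, SE))}
                    else {((i, NW), (i, SW)), ((i, NE), (i, SE))})"

definition num_loops :: "ldiag \<Rightarrow> nat set \<Rightarrow> nat" where
  "num_loops D S = (let R = snd D \<union> (\<Union>i<fst D. smoothing S i) in
     card (({..<fst D} \<times> UNIV) // ((R \<union> R\<inverse>)\<^sup>*)))"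

text \<open>V(t) = (-A^3)^(-w) <D> with A = t^(-1/4); writing s = t^(1/2) = fls_X,
  the state S contributes (-1)^w s^((3w+n)/2 - |S|) (-(s + s^-1))^(loops-1).\<close>
definition jones :: "ldiag \<Rightarrow> (slot \<Rightarrow> bool) \<Rightarrow> int fls" where
  "jones D ori = (let n = fst D; w = writhe D ori in
     (if even w then 1 else -1) *
     (\<Sum>S\<in>Pow {..<n}. fls_X_intpow ((3 * w + int n) div 2 - int (card S)) *
        (- (fls_X + fls_X_inv)) ^ (num_loops D S - 1)))"

end

theory Submission
  imports Defs
begin

text \<open>In every state of an algebraic tangle the
  four ends are paired either horizontally, as in \<open>[0]\<close>, or vertically, as in \<open>[\<infinity>]\<close>, so the
  bracket splits into coefficients \<open>h(T)\<close> and \<open>v(T)\<close>.  Counting components when two tangles are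
  glued gives the usual recursion for \<open>h\<close> and \<open>v\<close> under tangle sum and vertical sum, and for the
  numerator closure \<open>N(T * R) = N(T) h(R) + (h(T) + \<delta> v(T)) v(R)\<close>, where \<open>s = t^(1/2)\<close> and
  \<open>\<delta> = -(s + s^-1)\<close>.  For \<open>T = [2/5]\<close> the factor
  \<open>h(T) + \<delta> v(T)\<close> is \<open>s^-6\<close> times the generator \<open>\<Phi>\<^sub>1\<^sub>0\<close> of \<open>I_t\<close>, and \<open>h([2/5]) \<equiv> s^-2 (1 - t^2)\<close> modulo \<open>\<Phi>\<^sub>1\<^sub>0\<close>, while
  \<open>h([1/2]) = -s^-3 (1 - t)\<close> and \<open>N([2/5]) = -s^-7 (1 + t^2)\<close>.  Hence the bracket of the Montesinos
  link is congruent to a unit times \<open>(1 + t^2) (1 - t^2)^(k-1) (1 - t)^m\<close>; the orientation only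
  enters through the writhe, i.e. through a unit.  Part (ii) follows from
  \<open>(1 + t^2)(1 - t) = \<Phi>\<^sub>1\<^sub>0 - t^4\<close>.\<close>

section \<open>Connected components of a graph given by an edge set\<close>

definition conn :: "('a \<times> 'a) set \<Rightarrow> ('a \<times> 'a) set" where
  "conn E = (E \<union> E\<inverse>)\<^sup>*"

definition ncomponents :: "'a set \<Rightarrow> ('a \<times> 'a) set \<Rightarrow> nat" where
  "ncomponents V E = card ((\<lambda>x. conn E `` {x}) ` V)"

lemma equiv_conn: "equiv UNIV (conn E)"
  unfolding conn_def
  by (intro equivI refl_rtrancl sym_rtrancl sym_Un_converse trans_rtrancl) simp

lemma conn_refl [simp]: "(x, x) \<in> conn E"
  by (simp add: conn_def)

lemma conn_sym: "(x, y) \<in> conn E \<Longrightarrow> (y, x) \<in> conn E"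
  using equiv_conn by (metis equivE symD)

lemma conn_trans: "(x, y) \<in> conn E \<Longrightarrow> (y, z) \<in> conn E \<Longrightarrow> (x, z) \<in> conn E"
  unfolding conn_def by (rule rtrancl_trans)

lemma conn_class_eq: "conn E `` {x} = conn E `` {y} \<longleftrightarrow> (x, y) \<in> conn E"
  by (simp add: eq_equiv_class_iff[OF equiv_conn])

lemma conn_mono: "E \<subseteq> F \<Longrightarrow> (x, y) \<in> conn E \<Longrightarrow> (x, y) \<in> conn F"
  unfolding conn_def by (rule rtrancl_mono[THEN subsetD]) auto

lemma conn_empty: "(x, y) \<in> conn {} \<longleftrightarrow> x = y"
  by (simp add: conn_def)

lemma conn_insert:
  "(x, y) \<in> conn (insert (a, b) E) \<longleftrightarrow>
     (x, y) \<in> conn E \<or> ((x, a) \<in> conn E \<and> (b, y) \<in> conn E) \<or> ((x, b) \<in> conn E \<and> (a, y) \<in> conn E)"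
    (is "?L \<longleftrightarrow> ?R")
proof
  assume ?L
  then have "(x, y) \<in> (insert (a, b) E \<union> (insert (a, b) E)\<inverse>)\<^sup>*" by (simp add: conn_def)
  then show ?R
  proof (induction rule: rtrancl_induct)
    case (step y z)
    then consider "(y, z) \<in> E \<union> E\<inverse>" | "y = a" "z = b" | "y = b" "z = a" by auto
    then show ?case
    proof cases
      case 1
      then have "(y, z) \<in> conn E" by (auto simp: conn_def)
      then show ?thesis using step.IH conn_trans[of _ y E z] by blast
    next
      case 2
      then show ?thesis using step.IH by auto
    next
      case 3
      then show ?thesis using step.IH by auto
    qed
  qed simp
next
  have ab: "(a, b) \<in> conn (insert (a, b) E)" and ba: "(b, a) \<in> conn (insert (a, b) E)"
    by (auto simp: conn_def)
  have "\<And>u v. (u, v) \<in> conn E \<Longrightarrow> (u, v) \<in> conn (insert (a, b) E)"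
    by (rule conn_mono[rotated]) auto
  then show "?R \<Longrightarrow> ?L" using ab ba conn_trans by meson
qed

lemma conn_within:
  assumes "E \<subseteq> V \<times> V" "(x, y) \<in> conn E"
  shows "x = y \<or> (x \<in> V \<and> y \<in> V)"
proof -
  from assms(2) have "(x, y) \<in> (E \<union> E\<inverse>)\<^sup>*" by (simp add: conn_def)
  then show ?thesis
    by (induction rule: rtrancl_induct) (use assms(1) in auto)
qed

lemma conn_Un_disjoint:
  assumes "E1 \<subseteq> V1 \<times> V1" "E2 \<subseteq> V2 \<times> V2" "V1 \<inter> V2 = {}"
  shows "(x, y) \<in> conn (E1 \<union> E2) \<longleftrightarrow> (x, y) \<in> conn E1 \<or> (x, y) \<in> conn E2"
proof
  assume "(x, y) \<in> conn (E1 \<union> E2)"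
  then have "(x, y) \<in> ((E1 \<union> E2) \<union> (E1 \<union> E2)\<inverse>)\<^sup>*" by (simp add: conn_def)
  then show "(x, y) \<in> conn E1 \<or> (x, y) \<in> conn E2"
  proof (induction rule: rtrancl_induct)
    case (step y z)
    then consider "(y, z) \<in> E1 \<union> E1\<inverse>" | "(y, z) \<in> E2 \<union> E2\<inverse>" by auto
    then show ?case
    proof cases
      case 1
      then have yz: "(y, z) \<in> conn E1" and "y \<in> V1" using assms(1) by (auto simp: conn_def)
      \<comment> \<open>a path cannot leave \<open>V2\<close> through an edge of \<open>E1\<close>\<close>
      then have "(x, y) \<in> conn E1" using step.IH conn_within[OF assms(2), of x y] assms(3) by auto
      then show ?thesis using conn_trans[OF _ yz] by blast
    next
      case 2
      then have yz: "(y, z) \<in> conn E2" and "y \<in> V2" using assms(2) by (auto simp: conn_def)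
      then have "(x, y) \<in> conn E2" using step.IH conn_within[OF assms(1), of x y] assms(3) by auto
      then show ?thesis using conn_trans[OF _ yz] by blast
    qed
  qed simp
qed (meson conn_mono sup_ge1 sup_ge2)

lemma conn_image_iff:
  assumes "inj f"
  shows "(f x, f y) \<in> conn (map_prod f f ` E) \<longleftrightarrow> (x, y) \<in> conn E"
proof
  have path: "(u, v) \<in> (map_prod f f ` E \<union> (map_prod f f ` E)\<inverse>)\<^sup>*
    \<Longrightarrow> u = v \<or> (\<exists>x y. u = f x \<and> v = f y \<and> (x, y) \<in> conn E)" for u v
  proof (induction rule: rtrancl_induct)
    case (step v w)
    from step(2) obtain a b where ab: "(a, b) \<in> conn E" "v = f a" "w = f b"
      by (auto simp: conn_def)
    with step.IH assms show ?case by (auto simp: inj_eq intro: conn_trans)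
  qed simp
  assume "(f x, f y) \<in> conn (map_prod f f ` E)"
  then consider "f x = f y" | x' y' where "f x = f x'" "f y = f y'" "(x', y') \<in> conn E"
    using path unfolding conn_def by blast
  then show "(x, y) \<in> conn E" using assms by cases (simp_all add: inj_eq)
next
  assume "(x, y) \<in> conn E"
  then have "(x, y) \<in> (E \<union> E\<inverse>)\<^sup>*" by (simp add: conn_def)
  then show "(f x, f y) \<in> conn (map_prod f f ` E)"
  proof (induction rule: rtrancl_induct)
    case (step y z)
    then have "(f y, f z) \<in> conn (map_prod f f ` E)"
      unfolding conn_def by (auto intro: r_into_rtrancl rev_image_eqI)
    with step.IH show ?case by (rule conn_trans)
  qed simp
qed

lemma card_image_cong_kernel:
  assumes "\<And>x y. x \<in> A \<Longrightarrow> y \<in> A \<Longrightarrow> h x = h y \<longleftrightarrow> g x = g y"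
  shows "card (h ` A) = card (g ` A)"
proof -
  define \<phi> where "\<phi> c = h (inv_into A g c)" for c
  have phi: "\<phi> (g x) = h x" if "x \<in> A" for x
    using that assms[of "inv_into A g (g x)" x]
    by (simp add: \<phi>_def inv_into_into f_inv_into_f)
  have "h ` A = \<phi> ` (g ` A)" using phi by (simp add: image_image)
  moreover have "inj_on \<phi> (g ` A)"
    by (rule inj_onI) (use phi assms in auto)
  ultimately show ?thesis by (simp add: card_image)
qed

lemma ncomponents_cong:
  assumes "\<And>x y. x \<in> V \<Longrightarrow> y \<in> V \<Longrightarrow> (x, y) \<in> conn E \<longleftrightarrow> (x, y) \<in> conn E'"
  shows "ncomponents V E = ncomponents V E'"
  unfolding ncomponents_def
  by (rule card_image_cong_kernel) (simp add: conn_class_eq assms)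

lemma ncomponents_image:
  assumes "inj f"
  shows "ncomponents (f ` V) (map_prod f f ` E) = ncomponents V E"
  unfolding ncomponents_def image_image
  by (rule card_image_cong_kernel) (simp add: conn_class_eq conn_image_iff[OF assms])

lemma ncomponents_empty:
  assumes "finite V"
  shows "ncomponents V {} = card V"
proof -
  have "ncomponents V {} = card ((\<lambda>x. {x}) ` V)"
    unfolding ncomponents_def
    by (rule card_image_cong_kernel) (simp add: conn_class_eq conn_empty)
  also have "\<dots> = card V" by (rule card_image) (simp add: inj_on_def)
  finally show ?thesis .
qed

lemma ncomponents_Un:
  assumes fin: "finite V1" "finite V2" and sub: "E1 \<subseteq> V1 \<times> V1" "E2 \<subseteq> V2 \<times> V2"
    and disj: "V1 \<inter> V2 = {}"
  shows "ncomponents (V1 \<union> V2) (E1 \<union> E2) = ncomponents V1 E1 + ncomponents V2 E2"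
proof -
  define c where "c z = conn (E1 \<union> E2) `` {z}" for z
  have c_eq: "c x = c y \<longleftrightarrow> (x, y) \<in> conn E1 \<or> (x, y) \<in> conn E2" for x y
    unfolding c_def conn_class_eq by (rule conn_Un_disjoint[OF sub disj])
  have only1: "(x, y) \<in> conn E1 \<Longrightarrow> x \<noteq> y \<Longrightarrow> x \<in> V1 \<and> y \<in> V1" for x y
    using conn_within[OF sub(1)] by blast
  have only2: "(x, y) \<in> conn E2 \<Longrightarrow> x \<noteq> y \<Longrightarrow> x \<in> V2 \<and> y \<in> V2" for x y
    using conn_within[OF sub(2)] by blast
  have "c ` V1 \<inter> c ` V2 = {}"
    using disj by (fastforce simp: c_eq dest: only1 only2)
  then have "card (c ` (V1 \<union> V2)) = card (c ` V1) + card (c ` V2)"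
    by (simp add: image_Un card_Un_disjoint fin)
  moreover have "card (c ` V1) = ncomponents V1 E1"
    unfolding ncomponents_def
    by (rule card_image_cong_kernel) (use disj in \<open>auto simp: c_eq conn_class_eq dest: only2\<close>)
  moreover have "card (c ` V2) = ncomponents V2 E2"
    unfolding ncomponents_def
    by (rule card_image_cong_kernel) (use disj in \<open>auto simp: c_eq conn_class_eq dest: only1\<close>)
  ultimately show ?thesis unfolding ncomponents_def c_def by simp
qed

lemma ncomponents_insert_connected:
  assumes "(a, b) \<in> conn E"
  shows "ncomponents V (insert (a, b) E) = ncomponents V E"
proof (rule ncomponents_cong)
  fix x y
  have "(b, a) \<in> conn E" using assms by (rule conn_sym)
  then show "(x, y) \<in> conn (insert (a, b) E) \<longleftrightarrow> (x, y) \<in> conn E"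
    unfolding conn_insert using assms conn_trans[of x _ E y] conn_trans[of x _ E _] by blast
qed

lemma ncomponents_insert_disconnected:
  assumes fin: "finite V" and ab: "a \<in> V" "b \<in> V" "(a, b) \<notin> conn E"
  shows "ncomponents V (insert (a, b) E) + 1 = ncomponents V E"
proof -
  define c where "c z = conn E `` {z}" for z
  define c' where "c' z = conn (insert (a, b) E) `` {z}" for z
  define W where "W = {x \<in> V. (x, a) \<in> conn E \<or> (x, b) \<in> conn E}"
  define U where "U = V - W"
  have VWU: "V = W \<union> U" "W \<inter> U = {}" and finWU: "finite W" "finite U"
    using fin unfolding U_def W_def by auto
  have aW: "a \<in> W" and bW: "b \<in> W" using ab unfolding W_def by auto
  have cW: "c ` W = {c a, c b}"
  proof
    have "c x = c a \<or> c x = c b" if "x \<in> W" for x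
      using that unfolding W_def c_def conn_class_eq by blast
    then show "c ` W \<subseteq> {c a, c b}" by blast
  qed (use aW bW in auto)
  have cab: "c a \<noteq> c b" using ab(3) unfolding c_def conn_class_eq .
  have dis: "c ` W \<inter> c ` U = {}"
  proof -
    have "c u \<noteq> c a" "c u \<noteq> c b" if "u \<in> U" for u
      using that unfolding U_def W_def c_def conn_class_eq by (auto dest: conn_sym)
    then show ?thesis unfolding cW by blast
  qed
  \<comment> \<open>the new edge merges the classes of \<open>a\<close> and \<open>b\<close> and leaves the others alone\<close>
  have c'W: "c' ` W = {c' a}"
  proof -
    have "c' x = c' a" if "x \<in> W" for x
      using that unfolding W_def c'_def conn_class_eq conn_insert by auto
    then show ?thesis using aW by blast
  qed
  have dis': "c' ` W \<inter> c' ` U = {}"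
  proof -
    have "c' u \<noteq> c' a" if "u \<in> U" for u
      using that unfolding U_def W_def c'_def conn_class_eq conn_insert by auto
    then show ?thesis using c'W by auto
  qed
  have cU: "card (c' ` U) = card (c ` U)"
  proof (rule card_image_cong_kernel)
    fix x y assume "x \<in> U" "y \<in> U"
    then have "(x, a) \<notin> conn E" "(x, b) \<notin> conn E" unfolding U_def W_def by auto
    then show "c' x = c' y \<longleftrightarrow> c x = c y"
      unfolding c'_def c_def conn_class_eq conn_insert by auto
  qed
  have "ncomponents V (insert (a, b) E) = card (c' ` W) + card (c' ` U)"
    unfolding ncomponents_def c'_def[symmetric] using VWU dis' finWU
    by (simp add: image_Un card_Un_disjoint)
  moreover have "ncomponents V E = card (c ` W) + card (c ` U)"
    unfolding ncomponents_def c_def[symmetric] using VWU dis finWU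
    by (simp add: image_Un card_Un_disjoint)
  ultimately show ?thesis using cW c'W cab cU by simp
qed

lemma ncomponents_ge_2:
  assumes fin: "finite V" and ab: "a \<in> V" "b \<in> V" "(a, b) \<notin> conn E"
  shows "ncomponents V E \<ge> 2"
proof -
  have "card {conn E `` {a}, conn E `` {b}} = 2" using ab(3) by (simp add: conn_class_eq)
  moreover have "{conn E `` {a}, conn E `` {b}} \<subseteq> (\<lambda>x. conn E `` {x}) ` V" using ab by auto
  ultimately show ?thesis unfolding ncomponents_def using fin
    by (metis card_mono finite_imageI)
qed


section \<open>Gluing two crossingless tangles\<close>

definition paired_ends :: "('a \<times> 'a) set \<Rightarrow> 'a \<Rightarrow> 'a \<Rightarrow> 'a \<Rightarrow> 'a \<Rightarrow> bool" where
  "paired_ends r nw ne sw se \<longleftrightarrow>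
     ((nw, ne) \<in> r \<and> (sw, se) \<in> r \<and> (nw, sw) \<notin> r) \<or>
     ((nw, sw) \<in> r \<and> (ne, se) \<in> r \<and> (nw, ne) \<notin> r)"

lemma paired_ends_transpose: "paired_ends r nw sw ne se \<longleftrightarrow> paired_ends r nw ne sw se"
  unfolding paired_ends_def by blast

lemma paired_ends_vertical_iff:
  "paired_ends r nw ne sw se \<Longrightarrow> (nw, sw) \<in> r \<longleftrightarrow> (nw, ne) \<notin> r"
  unfolding paired_ends_def by blast

lemma paired_ends_classes:
  assumes "paired_ends (conn E) nw ne sw se"
  shows "(nw, ne) \<in> conn E \<Longrightarrow> conn E `` {ne} = conn E `` {nw} \<and>
           conn E `` {se} = conn E `` {sw} \<and> conn E `` {nw} \<noteq> conn E `` {sw}"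
    and "(nw, ne) \<notin> conn E \<Longrightarrow> conn E `` {sw} = conn E `` {nw} \<and>
           conn E `` {se} = conn E `` {ne} \<and> conn E `` {nw} \<noteq> conn E `` {ne}"
  using assms unfolding paired_ends_def conn_class_eq by (auto dest: conn_sym)

lemma conn_Un_image:
  fixes RA RB :: "('a \<times> 'a) set"
  assumes sub: "RA \<subseteq> VA \<times> VA" "RB \<subseteq> VB \<times> VB" and disj: "VA \<inter> f ` VB = {}"
    and inj: "inj f"
  defines "E \<equiv> RA \<union> map_prod f f ` RB"
  shows "x \<in> VA \<Longrightarrow> y \<in> VA \<Longrightarrow> (x, y) \<in> conn E \<longleftrightarrow> (x, y) \<in> conn RA"
    and "x \<in> VB \<Longrightarrow> y \<in> VB \<Longrightarrow> (f x, f y) \<in> conn E \<longleftrightarrow> (x, y) \<in> conn RB"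
    and "x \<in> VA \<Longrightarrow> y \<in> VB \<Longrightarrow> (x, f y) \<notin> conn E"
proof -
  have subf: "map_prod f f ` RB \<subseteq> f ` VB \<times> f ` VB" using sub(2) by auto
  have E: "(u, v) \<in> conn E \<longleftrightarrow> (u, v) \<in> conn RA \<or> (u, v) \<in> conn (map_prod f f ` RB)" for u v
    unfolding E_def by (rule conn_Un_disjoint[OF sub(1) subf disj])
  note withinA = conn_within[OF sub(1)] and withinB = conn_within[OF subf]
  show "x \<in> VA \<Longrightarrow> y \<in> VA \<Longrightarrow> (x, y) \<in> conn E \<longleftrightarrow> (x, y) \<in> conn RA"
    unfolding E using withinB[of x y] disj by (auto simp: disjoint_iff)
  show "x \<in> VB \<Longrightarrow> y \<in> VB \<Longrightarrow> (f x, f y) \<in> conn E \<longleftrightarrow> (x, y) \<in> conn RB"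
    unfolding E conn_image_iff[OF inj] using withinA[of "f x" "f y"] disj inj
    by (auto simp: inj_eq disjoint_iff) blast
  show "x \<in> VA \<Longrightarrow> y \<in> VB \<Longrightarrow> (x, f y) \<notin> conn E"
    unfolding E using withinA[of x "f y"] withinB[of x "f y"] disj by auto
qed

text \<open>Joining NE of \<open>A\<close> to NW of \<open>B\<close> and SE of \<open>A\<close> to SW of \<open>B\<close> (the tangle sum \<open>A * B\<close>):
  each joining edge merges two components, except that the second one closes a loop when both
  parts are vertical.\<close>

lemma tangle_sum_glue:
  fixes RA RB :: "('a \<times> 'a) set"
  assumes sub: "RA \<subseteq> VA \<times> VA" "RB \<subseteq> VB \<times> VB" and disj: "VA \<inter> f ` VB = {}"
    and inj: "inj f" and fin: "finite VA" "finite VB"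
    and pts: "a1 \<in> VA" "a2 \<in> VA" "a3 \<in> VA" "a4 \<in> VA" "b1 \<in> VB" "b2 \<in> VB" "b3 \<in> VB" "b4 \<in> VB"
    and pA: "paired_ends (conn RA) a1 a2 a3 a4" and pB: "paired_ends (conn RB) b1 b2 b3 b4"
  defines "E \<equiv> insert (a4, f b3) (insert (a2, f b1) (RA \<union> map_prod f f ` RB))"
  shows "paired_ends (conn E) a1 (f b2) a3 (f b4)"
    and "(a1, f b2) \<in> conn E \<longleftrightarrow> (a1, a2) \<in> conn RA \<and> (b1, b2) \<in> conn RB"
    and "ncomponents (VA \<union> f ` VB) E + (if (a1, a2) \<notin> conn RA \<and> (b1, b2) \<notin> conn RB then 1 else 2)
           = ncomponents VA RA + ncomponents VB RB"
proof -
  define E0 where "E0 = RA \<union> map_prod f f ` RB"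
  define E1 where "E1 = insert (a2, f b1) E0"
  have E: "E = insert (a4, f b3) E1" unfolding E_def E1_def E0_def ..
  note E0 = conn_Un_image[OF sub disj inj, folded E0_def]
  define cl where "cl z = conn E0 `` {z}" for z
  have clA: "cl x = cl y \<longleftrightarrow> conn RA `` {x} = conn RA `` {y}" if "x \<in> VA" "y \<in> VA" for x y
    unfolding cl_def conn_class_eq using E0(1)[OF that] .
  have clB: "cl (f x) = cl (f y) \<longleftrightarrow> conn RB `` {x} = conn RB `` {y}" if "x \<in> VB" "y \<in> VB" for x y
    unfolding cl_def conn_class_eq using E0(2)[OF that] .
  have clX: "(cl x = cl (f y)) = False" if "x \<in> VA" "y \<in> VB" for x y
    unfolding cl_def conn_class_eq using E0(3)[OF that] by simp
  have clX': "(cl (f y) = cl x) = False" if "x \<in> VA" "y \<in> VB" for x y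
    using clX[OF that] by auto
  have eA: "if (a1, a2) \<in> conn RA then cl a2 = cl a1 \<and> cl a4 = cl a3 \<and> cl a1 \<noteq> cl a3
            else cl a3 = cl a1 \<and> cl a4 = cl a2 \<and> cl a1 \<noteq> cl a2"
    using paired_ends_classes[OF pA] by (simp add: clA pts)
  have eB: "if (b1, b2) \<in> conn RB then cl (f b2) = cl (f b1) \<and> cl (f b4) = cl (f b3) \<and> cl (f b1) \<noteq> cl (f b3)
            else cl (f b3) = cl (f b1) \<and> cl (f b4) = cl (f b2) \<and> cl (f b1) \<noteq> cl (f b2)"
    using paired_ends_classes[OF pB] by (simp add: clB pts)
  have shape: "paired_ends (conn E) a1 (f b2) a3 (f b4) \<and>
    ((a1, f b2) \<in> conn E \<longleftrightarrow> (a1, a2) \<in> conn RA \<and> (b1, b2) \<in> conn RB) \<and>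
    ((a4, f b3) \<in> conn E1 \<longleftrightarrow> (a1, a2) \<notin> conn RA \<and> (b1, b2) \<notin> conn RB)"
    using eA eB
    unfolding paired_ends_def E E1_def conn_insert
    unfolding conn_class_eq[of E0, symmetric] cl_def[symmetric]
    by (cases "(a1, a2) \<in> conn RA"; cases "(b1, b2) \<in> conn RB") (auto simp: clX clX' pts)
  then show "paired_ends (conn E) a1 (f b2) a3 (f b4)"
    and "(a1, f b2) \<in> conn E \<longleftrightarrow> (a1, a2) \<in> conn RA \<and> (b1, b2) \<in> conn RB"
    by blast+
  have subf: "map_prod f f ` RB \<subseteq> f ` VB \<times> f ` VB" using sub(2) by auto
  have n0: "ncomponents (VA \<union> f ` VB) E0 = ncomponents VA RA + ncomponents VB RB"
    unfolding E0_def using ncomponents_Un[OF fin(1) _ sub(1) subf disj] fin(2)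
    by (simp add: ncomponents_image[OF inj])
  have n1: "ncomponents (VA \<union> f ` VB) E1 + 1 = ncomponents (VA \<union> f ` VB) E0"
    unfolding E1_def by (rule ncomponents_insert_disconnected) (use fin pts E0(3) in auto)
  show "ncomponents (VA \<union> f ` VB) E + (if (a1, a2) \<notin> conn RA \<and> (b1, b2) \<notin> conn RB then 1 else 2)
           = ncomponents VA RA + ncomponents VB RB"
  proof (cases "(a4, f b3) \<in> conn E1")
    case True
    then have "ncomponents (VA \<union> f ` VB) E = ncomponents (VA \<union> f ` VB) E1"
      unfolding E by (rule ncomponents_insert_connected)
    then show ?thesis using shape True n0 n1 by simp
  next
    case False
    then have "ncomponents (VA \<union> f ` VB) E + 1 = ncomponents (VA \<union> f ` VB) E1"
      unfolding E by (intro ncomponents_insert_disconnected) (use fin pts in auto)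
    then show ?thesis using shape False n0 n1 by simp
  qed
qed

text \<open>The vertical sum is the tangle sum of the transposed tangles (swap NE and SW).\<close>

lemma vertical_sum_glue:
  fixes RA RB :: "('a \<times> 'a) set"
  assumes sub: "RA \<subseteq> VA \<times> VA" "RB \<subseteq> VB \<times> VB" and disj: "VA \<inter> f ` VB = {}"
    and inj: "inj f" and fin: "finite VA" "finite VB"
    and pts: "a1 \<in> VA" "a2 \<in> VA" "a3 \<in> VA" "a4 \<in> VA" "b1 \<in> VB" "b2 \<in> VB" "b3 \<in> VB" "b4 \<in> VB"
    and pA: "paired_ends (conn RA) a1 a2 a3 a4" and pB: "paired_ends (conn RB) b1 b2 b3 b4"
  defines "E \<equiv> insert (a4, f b2) (insert (a3, f b1) (RA \<union> map_prod f f ` RB))"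
  shows "paired_ends (conn E) a1 a2 (f b3) (f b4)"
    and "(a1, a2) \<in> conn E \<longleftrightarrow> (a1, a2) \<in> conn RA \<or> (b1, b2) \<in> conn RB"
    and "ncomponents (VA \<union> f ` VB) E + (if (a1, a2) \<in> conn RA \<and> (b1, b2) \<in> conn RB then 1 else 2)
           = ncomponents VA RA + ncomponents VB RB"
proof -
  note glue = tangle_sum_glue[OF sub disj inj fin, of a1 a3 a2 a4 b1 b3 b2 b4, folded E_def]
  note pA' = paired_ends_transpose[THEN iffD2, OF pA]
    and pB' = paired_ends_transpose[THEN iffD2, OF pB]
  note G = glue(1)[OF pts(1,3,2,4,5,7,6,8) pA' pB']
  show "paired_ends (conn E) a1 a2 (f b3) (f b4)"
    using paired_ends_transpose[THEN iffD1, OF G] .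
  show "(a1, a2) \<in> conn E \<longleftrightarrow> (a1, a2) \<in> conn RA \<or> (b1, b2) \<in> conn RB"
    using glue(2)[OF pts(1,3,2,4,5,7,6,8) pA' pB'] paired_ends_vertical_iff[OF G]
      paired_ends_vertical_iff[OF pA] paired_ends_vertical_iff[OF pB] by blast
  show "ncomponents (VA \<union> f ` VB) E + (if (a1, a2) \<in> conn RA \<and> (b1, b2) \<in> conn RB then 1 else 2)
           = ncomponents VA RA + ncomponents VB RB"
    using glue(3)[OF pts(1,3,2,4,5,7,6,8) pA' pB']
      paired_ends_vertical_iff[OF pA] paired_ends_vertical_iff[OF pB] by simp
qed


section \<open>States of algebraic tangle diagrams\<close>

definition slots :: "nat \<Rightarrow> slot set" where
  "slots n = {..<n} \<times> UNIV"

definition state_edges :: "tdiag \<Rightarrow> nat set \<Rightarrow> (slot \<times> slot) set" where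
  "state_edges D S = arcs D \<union> (\<Union>i<ncr D. smoothing S i)"

definition well_formed :: "tdiag \<Rightarrow> bool" where
  "well_formed D \<longleftrightarrow> arcs D \<subseteq> slots (ncr D) \<times> slots (ncr D) \<and>
     {bnw D, bne D, bsw D, bse D} \<subseteq> slots (ncr D)"

lemma UNIV_corner: "(UNIV :: corner set) = {NW, NE, SW, SE}"
  by (auto intro: corner.exhaust)

lemma finite_UNIV_corner [simp]: "finite (UNIV :: corner set)"
  by (simp add: UNIV_corner)

lemma finite_slots [simp]: "finite (slots n)"
  by (simp add: slots_def)

lemma card_slots_1: "card (slots 1) = 4"
  by (simp add: slots_def UNIV_corner card_cartesian_product)

lemma inj_shift_slot: "inj (shift_slot k)"
  by (auto simp: inj_def shift_slot_def prod_eq_iff)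

lemma slots_add: "slots (k + n) = slots k \<union> shift_slot k ` slots n"
proof -
  have "(i, c) \<in> shift_slot k ` slots n" if "k \<le> i" "i < k + n" for i c
    using that by (intro rev_image_eqI[of "(i - k, c)"]) (auto simp: slots_def shift_slot_def)
  then show ?thesis by (auto simp: slots_def shift_slot_def not_less) (meson not_less)
qed

lemma slots_disjoint_shift: "slots k \<inter> shift_slot k ` slots n = {}"
  by (auto simp: slots_def shift_slot_def)

lemma UN_smoothing_add:
  "(\<Union>i<k + n. smoothing S i) =
     (\<Union>i<k. smoothing (S \<inter> {..<k}) i) \<union>
     map_prod (shift_slot k) (shift_slot k) ` (\<Union>j<n. smoothing {j. j + k \<in> S} j)"
proof -
  have "i \<in> (\<lambda>j. j + k) ` {..<n}" if "k \<le> i" "i < k + n" for i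
    using that by (intro rev_image_eqI[of "i - k"]) auto
  then have "{..<k + n} = {..<k} \<union> (\<lambda>j. j + k) ` {..<n}"
    by (auto simp: not_less) (meson not_less)
  then have "(\<Union>i<k + n. smoothing S i) = (\<Union>i<k. smoothing S i) \<union> (\<Union>j<n. smoothing S (j + k))"
    by auto
  also have "(\<Union>i<k. smoothing S i) = (\<Union>i<k. smoothing (S \<inter> {..<k}) i)"
    by (rule SUP_cong) (simp_all add: smoothing_def)
  also have "(\<Union>j<n. smoothing S (j + k)) =
      map_prod (shift_slot k) (shift_slot k) ` (\<Union>j<n. smoothing {j. j + k \<in> S} j)"
  proof -
    have "smoothing S (j + k) =
        map_prod (shift_slot k) (shift_slot k) ` smoothing {j. j + k \<in> S} j" for j
      by (simp add: smoothing_def shift_slot_def)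
    then show ?thesis unfolding image_UN by simp
  qed
  finally show ?thesis .
qed

lemma state_edges_subset: "well_formed D \<Longrightarrow> state_edges D S \<subseteq> slots (ncr D) \<times> slots (ncr D)"
  unfolding state_edges_def well_formed_def by (auto simp: smoothing_def slots_def)

lemma well_formed_tdiag_of: "well_formed (tdiag_of T)"
  by (induction T) (fastforce simp: well_formed_def slots_def shift_slot_def Let_def)+

lemma state_edges_TSum:
  fixes T R :: ctangle
  defines "A \<equiv> tdiag_of T" and "B \<equiv> tdiag_of R"
  defines "f \<equiv> shift_slot (ncr A)"
  shows "state_edges (tdiag_of (TSum T R)) S =
    insert (bse A, f (bsw B)) (insert (bne A, f (bnw B))
      (state_edges A (S \<inter> {..<ncr A}) \<union> map_prod f f ` state_edges B {j. j + ncr A \<in> S}))"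
  unfolding state_edges_def A_def B_def f_def
  by (simp add: Let_def UN_smoothing_add image_Un) blast

lemma state_edges_VSum:
  fixes T R :: ctangle
  defines "A \<equiv> tdiag_of T" and "B \<equiv> tdiag_of R"
  defines "f \<equiv> shift_slot (ncr A)"
  shows "state_edges (tdiag_of (VSum T R)) S =
    insert (bse A, f (bne B)) (insert (bsw A, f (bnw B))
      (state_edges A (S \<inter> {..<ncr A}) \<union> map_prod f f ` state_edges B {j. j + ncr A \<in> S}))"
  unfolding state_edges_def A_def B_def f_def
  by (simp add: Let_def UN_smoothing_add image_Un) blast

definition state_paired :: "tdiag \<Rightarrow> nat set \<Rightarrow> bool" where
  "state_paired D S \<longleftrightarrow> paired_ends (conn (state_edges D S)) (bnw D) (bne D) (bsw D) (bse D)"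

definition horizontal :: "tdiag \<Rightarrow> nat set \<Rightarrow> bool" where
  "horizontal D S \<longleftrightarrow> (bnw D, bne D) \<in> conn (state_edges D S)"

text \<open>The number of components of the smoothed tangle, its two boundary arcs included.\<close>

definition state_ncomp :: "tdiag \<Rightarrow> nat set \<Rightarrow> nat" where
  "state_ncomp D S = ncomponents (slots (ncr D)) (state_edges D S)"

lemma ncomponents_two_edges:
  assumes "distinct [a, b, c, d]"
  shows "ncomponents (slots 1) {((0, a), (0, b)), ((0, c), (0, d))} = 2"
proof -
  have "ncomponents (slots 1) {((0, c), (0, d))} + 1 = ncomponents (slots 1) {}"
    by (rule ncomponents_insert_disconnected) (use assms in \<open>auto simp: slots_def conn_empty\<close>)
  moreover have "ncomponents (slots 1) {((0, a), (0, b)), ((0, c), (0, d))} + 1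
      = ncomponents (slots 1) {((0, c), (0, d))}"
    by (rule ncomponents_insert_disconnected)
      (use assms in \<open>auto simp: slots_def conn_empty conn_insert\<close>)
  moreover have "ncomponents (slots 1) {} = 4"
    using ncomponents_empty[of "slots 1"] card_slots_1 by simp
  ultimately show ?thesis by linarith
qed

lemma state_One:
  "state_paired (tdiag_of One) S \<and> (horizontal (tdiag_of One) S \<longleftrightarrow> 0 \<in> S) \<and>
   state_ncomp (tdiag_of One) S = 2"
proof (cases "0 \<in> S")
  case True
  then have "state_edges (tdiag_of One) S = {((0, NW), (0, NE)), ((0, SW), (0, SE))}"
    by (auto simp: state_edges_def smoothing_def)
  then show ?thesis using True ncomponents_two_edges[of NW NE SW SE]
    by (simp add: state_paired_def horizontal_def state_ncomp_def paired_ends_def conn_insert conn_empty)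
next
  case False
  then have "state_edges (tdiag_of One) S = {((0, NW), (0, SW)), ((0, NE), (0, SE))}"
    by (auto simp: state_edges_def smoothing_def)
  then show ?thesis using False ncomponents_two_edges[of NW SW NE SE]
    by (simp add: state_paired_def horizontal_def state_ncomp_def paired_ends_def conn_insert conn_empty)
qed


lemma boundary_in_slots:
  assumes "well_formed D"
  shows "bnw D \<in> slots (ncr D)" "bne D \<in> slots (ncr D)" "bsw D \<in> slots (ncr D)" "bse D \<in> slots (ncr D)"
  using assms unfolding well_formed_def by auto

lemma state_TSum:
  fixes T R :: ctangle and S :: "nat set"
  defines "A \<equiv> tdiag_of T" and "B \<equiv> tdiag_of R"
  defines "SA \<equiv> S \<inter> {..<ncr A}" and "SB \<equiv> {j. j + ncr A \<in> S}"
  assumes pA: "state_paired A SA" and pB: "state_paired B SB"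
  shows "state_paired (tdiag_of (TSum T R)) S"
    and "horizontal (tdiag_of (TSum T R)) S \<longleftrightarrow> horizontal A SA \<and> horizontal B SB"
    and "state_ncomp (tdiag_of (TSum T R)) S + (if \<not> horizontal A SA \<and> \<not> horizontal B SB then 1 else 2)
           = state_ncomp A SA + state_ncomp B SB"
proof -
  let ?f = "shift_slot (ncr A)"
  have wA: "well_formed A" and wB: "well_formed B"
    unfolding A_def B_def by (rule well_formed_tdiag_of)+
  have D: "bnw (tdiag_of (TSum T R)) = bnw A" "bne (tdiag_of (TSum T R)) = ?f (bne B)"
    "bsw (tdiag_of (TSum T R)) = bsw A" "bse (tdiag_of (TSum T R)) = ?f (bse B)"
    "slots (ncr (tdiag_of (TSum T R))) = slots (ncr A) \<union> ?f ` slots (ncr B)"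
    by (simp_all add: A_def B_def Let_def slots_add)
  note glue = tangle_sum_glue[OF state_edges_subset[OF wA] state_edges_subset[OF wB]
      slots_disjoint_shift inj_shift_slot finite_slots finite_slots
      boundary_in_slots[OF wA] boundary_in_slots[OF wB]
      pA[unfolded state_paired_def] pB[unfolded state_paired_def]]
  note defs = state_paired_def horizontal_def state_ncomp_def D
    state_edges_TSum[of T R S, folded A_def B_def, folded SA_def SB_def]
  show "state_paired (tdiag_of (TSum T R)) S"
    and "horizontal (tdiag_of (TSum T R)) S \<longleftrightarrow> horizontal A SA \<and> horizontal B SB"
    and "state_ncomp (tdiag_of (TSum T R)) S + (if \<not> horizontal A SA \<and> \<not> horizontal B SB then 1 else 2)
           = state_ncomp A SA + state_ncomp B SB"
    unfolding defs using glue by simp_all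
qed

lemma state_VSum:
  fixes T R :: ctangle and S :: "nat set"
  defines "A \<equiv> tdiag_of T" and "B \<equiv> tdiag_of R"
  defines "SA \<equiv> S \<inter> {..<ncr A}" and "SB \<equiv> {j. j + ncr A \<in> S}"
  assumes pA: "state_paired A SA" and pB: "state_paired B SB"
  shows "state_paired (tdiag_of (VSum T R)) S"
    and "horizontal (tdiag_of (VSum T R)) S \<longleftrightarrow> horizontal A SA \<or> horizontal B SB"
    and "state_ncomp (tdiag_of (VSum T R)) S + (if horizontal A SA \<and> horizontal B SB then 1 else 2)
           = state_ncomp A SA + state_ncomp B SB"
proof -
  let ?f = "shift_slot (ncr A)"
  have wA: "well_formed A" and wB: "well_formed B"
    unfolding A_def B_def by (rule well_formed_tdiag_of)+
  have D: "bnw (tdiag_of (VSum T R)) = bnw A" "bne (tdiag_of (VSum T R)) = bne A"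
    "bsw (tdiag_of (VSum T R)) = ?f (bsw B)" "bse (tdiag_of (VSum T R)) = ?f (bse B)"
    "slots (ncr (tdiag_of (VSum T R))) = slots (ncr A) \<union> ?f ` slots (ncr B)"
    by (simp_all add: A_def B_def Let_def slots_add)
  note glue = vertical_sum_glue[OF state_edges_subset[OF wA] state_edges_subset[OF wB]
      slots_disjoint_shift inj_shift_slot finite_slots finite_slots
      boundary_in_slots[OF wA] boundary_in_slots[OF wB]
      pA[unfolded state_paired_def] pB[unfolded state_paired_def]]
  note defs = state_paired_def horizontal_def state_ncomp_def D
    state_edges_VSum[of T R S, folded A_def B_def, folded SA_def SB_def]
  show "state_paired (tdiag_of (VSum T R)) S"
    and "horizontal (tdiag_of (VSum T R)) S \<longleftrightarrow> horizontal A SA \<or> horizontal B SB"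
    and "state_ncomp (tdiag_of (VSum T R)) S + (if horizontal A SA \<and> horizontal B SB then 1 else 2)
           = state_ncomp A SA + state_ncomp B SB"
    unfolding defs using glue by simp_all
qed

lemma state_paired_tdiag_of: "state_paired (tdiag_of T) S"
proof (induction T arbitrary: S)
  case One
  show ?case using state_One by blast
next
  case (TSum T R)
  show ?case using TSum.IH by (rule state_TSum(1))
next
  case (VSum T R)
  show ?case using VSum.IH by (rule state_VSum(1))
qed

lemma state_ncomp_ge_2: "state_ncomp (tdiag_of T) S \<ge> 2"
proof -
  let ?D = "tdiag_of T"
  have w: "well_formed ?D" by (rule well_formed_tdiag_of)
  have "(bnw ?D, bsw ?D) \<notin> conn (state_edges ?D S) \<or> (bnw ?D, bne ?D) \<notin> conn (state_edges ?D S)"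
    using state_paired_tdiag_of[of T S] unfolding state_paired_def paired_ends_def by blast
  then show ?thesis
    unfolding state_ncomp_def using boundary_in_slots[OF w] by (auto intro: ncomponents_ge_2)
qed


section \<open>The bracket of an algebraic tangle\<close>

text \<open>With \<open>s = t^(1/2)\<close> for \<open>fls_X\<close>, a trivial circle is worth \<open>delta\<close> and a state with \<open>|S|\<close>
  A-smoothings gets weight \<open>s^-|S|\<close>; the exponent \<open>state_ncomp - 2\<close> discounts the two components
  through the boundary.\<close>

definition delta :: "int fls" where
  "delta = - (fls_X + fls_X_inv)"

definition state_weight :: "tdiag \<Rightarrow> nat set \<Rightarrow> int fls" where
  "state_weight D S = fls_X_intpow (- int (card S)) * delta ^ (state_ncomp D S - 2)"

definition weight_h :: "tdiag \<Rightarrow> nat set \<Rightarrow> int fls" where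
  "weight_h D S = (if horizontal D S then state_weight D S else 0)"

definition weight_v :: "tdiag \<Rightarrow> nat set \<Rightarrow> int fls" where
  "weight_v D S = (if horizontal D S then 0 else state_weight D S)"

definition bracket_h :: "ctangle \<Rightarrow> int fls" where
  "bracket_h T = (\<Sum>S\<in>Pow {..<ncr (tdiag_of T)}. weight_h (tdiag_of T) S)"

definition bracket_v :: "ctangle \<Rightarrow> int fls" where
  "bracket_v T = (\<Sum>S\<in>Pow {..<ncr (tdiag_of T)}. weight_v (tdiag_of T) S)"

lemma split_shifted_Un:
  assumes "SA \<subseteq> {..<k}" "SB \<subseteq> {..<n::nat}"
  shows "(SA \<union> (\<lambda>j. j + k) ` SB) \<inter> {..<k} = SA"
    and "{j. j + k \<in> SA \<union> (\<lambda>j. j + k) ` SB} = SB"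
    and "card (SA \<union> (\<lambda>j. j + k) ` SB) = card SA + card SB"
proof -
  show "(SA \<union> (\<lambda>j. j + k) ` SB) \<inter> {..<k} = SA" and "{j. j + k \<in> SA \<union> (\<lambda>j. j + k) ` SB} = SB"
    using assms(1) by auto
  have "finite SA" "finite SB" "SA \<inter> (\<lambda>j. j + k) ` SB = {}"
    using assms finite_subset by auto
  then show "card (SA \<union> (\<lambda>j. j + k) ` SB) = card SA + card SB"
    by (simp add: card_Un_disjoint card_image)
qed

lemma sum_Pow_lessThan_add:
  "(\<Sum>S\<in>Pow {..<k + n}. F S) =
     (\<Sum>SA\<in>Pow {..<k}. \<Sum>SB\<in>Pow {..<n::nat}. F (SA \<union> (\<lambda>j. j + k) ` SB))"
proof -
  let ?g = "\<lambda>(SA, SB). SA \<union> (\<lambda>j. j + k) ` SB"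
  let ?h = "\<lambda>S. (S \<inter> {..<k}, {j. j + k \<in> S})"
  have "S \<inter> {..<k} \<union> (\<lambda>j. j + k) ` {j. j + k \<in> S} = S" for S
  proof -
    have "i \<in> (\<lambda>j. j + k) ` {j. j + k \<in> S}" if "i \<in> S" "\<not> i < k" for i
      using that by (intro rev_image_eqI[of "i - k"]) auto
    then show ?thesis by auto
  qed
  then have "bij_betw ?g (Pow {..<k} \<times> Pow {..<n}) (Pow {..<k + n})"
    by (intro bij_betw_byWitness[where f' = ?h]) (auto simp: split_shifted_Un(1,2))
  then have "(\<Sum>S\<in>Pow {..<k + n}. F S) = (\<Sum>p\<in>Pow {..<k} \<times> Pow {..<n}. F (?g p))"
    by (simp add: sum.reindex_bij_betw)
  then show ?thesis by (simp add: sum.cartesian_product split_def)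
qed

lemma state_weight_glue:
  assumes "state_ncomp D S + (if merge then 1 else 2) = state_ncomp A SA + state_ncomp B SB"
    and "state_ncomp A SA \<ge> 2" "state_ncomp B SB \<ge> 2" and "card S = card SA + card SB"
  shows "state_weight D S = (if merge then delta else 1) * (state_weight A SA * state_weight B SB)"
proof -
  have "state_ncomp D S - 2 = (if merge then 1 else 0) + (state_ncomp A SA - 2) + (state_ncomp B SB - 2)"
    using assms(1-3) by (simp split: if_splits)
  moreover have "fls_X_intpow (- int (card S)) =
      (fls_X_intpow (- int (card SA)) * fls_X_intpow (- int (card SB)) :: int fls)"
    by (subst fls_X_intpow_times_fls_X_intpow) (simp add: assms(4))
  ultimately show ?thesis
    unfolding state_weight_def by (simp add: power_add mult_ac)
qed

lemma weights_TSum: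
  fixes T R :: ctangle
  defines "A \<equiv> tdiag_of T" and "B \<equiv> tdiag_of R"
  assumes "SA \<subseteq> {..<ncr A}" and "SB \<subseteq> {..<ncr B}"
  defines "S \<equiv> SA \<union> (\<lambda>j. j + ncr A) ` SB"
  shows "weight_h (tdiag_of (TSum T R)) S = weight_h A SA * weight_h B SB"
    and "weight_v (tdiag_of (TSum T R)) S = weight_h A SA * weight_v B SB +
           weight_v A SA * weight_h B SB + delta * (weight_v A SA * weight_v B SB)"
proof -
  note split = split_shifted_Un[OF assms(3,4), folded S_def]
  note st = state_TSum[OF state_paired_tdiag_of state_paired_tdiag_of, of T R S,
      folded A_def B_def, unfolded split(1,2)]
  have w: "state_weight (tdiag_of (TSum T R)) S =
      (if \<not> horizontal A SA \<and> \<not> horizontal B SB then delta else 1) * (state_weight A SA * state_weight B SB)"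
    using st(3) state_ncomp_ge_2 state_ncomp_ge_2 split(3) unfolding A_def B_def by (rule state_weight_glue)
  show "weight_h (tdiag_of (TSum T R)) S = weight_h A SA * weight_h B SB"
    and "weight_v (tdiag_of (TSum T R)) S = weight_h A SA * weight_v B SB +
           weight_v A SA * weight_h B SB + delta * (weight_v A SA * weight_v B SB)"
    unfolding weight_h_def weight_v_def st(2) w by auto
qed

lemma weights_VSum:
  fixes T R :: ctangle
  defines "A \<equiv> tdiag_of T" and "B \<equiv> tdiag_of R"
  assumes "SA \<subseteq> {..<ncr A}" and "SB \<subseteq> {..<ncr B}"
  defines "S \<equiv> SA \<union> (\<lambda>j. j + ncr A) ` SB"
  shows "weight_v (tdiag_of (VSum T R)) S = weight_v A SA * weight_v B SB"
    and "weight_h (tdiag_of (VSum T R)) S = weight_h A SA * weight_v B SB +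
           weight_v A SA * weight_h B SB + delta * (weight_h A SA * weight_h B SB)"
proof -
  note split = split_shifted_Un[OF assms(3,4), folded S_def]
  note st = state_VSum[OF state_paired_tdiag_of state_paired_tdiag_of, of T R S,
      folded A_def B_def, unfolded split(1,2)]
  have w: "state_weight (tdiag_of (VSum T R)) S =
      (if horizontal A SA \<and> horizontal B SB then delta else 1) * (state_weight A SA * state_weight B SB)"
    using st(3) state_ncomp_ge_2 state_ncomp_ge_2 split(3) unfolding A_def B_def by (rule state_weight_glue)
  show "weight_v (tdiag_of (VSum T R)) S = weight_v A SA * weight_v B SB"
    and "weight_h (tdiag_of (VSum T R)) S = weight_h A SA * weight_v B SB +
           weight_v A SA * weight_h B SB + delta * (weight_h A SA * weight_h B SB)"
    unfolding weight_h_def weight_v_def st(2) w by auto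
qed


lemma ncr_tdiag_of_sum:
  "ncr (tdiag_of (TSum T R)) = ncr (tdiag_of T) + ncr (tdiag_of R)"
  "ncr (tdiag_of (VSum T R)) = ncr (tdiag_of T) + ncr (tdiag_of R)"
  by (simp_all add: Let_def)

lemma bracket_h_TSum: "bracket_h (TSum T R) = bracket_h T * bracket_h R"
  unfolding bracket_h_def ncr_tdiag_of_sum sum_Pow_lessThan_add
  by (simp del: tdiag_of.simps add: weights_TSum sum_product)

lemma bracket_v_TSum:
  "bracket_v (TSum T R) = bracket_h T * bracket_v R + bracket_v T * bracket_h R + delta * (bracket_v T * bracket_v R)"
proof -
  have "bracket_v (TSum T R) = (\<Sum>SA\<in>Pow {..<ncr (tdiag_of T)}. \<Sum>SB\<in>Pow {..<ncr (tdiag_of R)}.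
      weight_h (tdiag_of T) SA * weight_v (tdiag_of R) SB + weight_v (tdiag_of T) SA * weight_h (tdiag_of R) SB
      + delta * (weight_v (tdiag_of T) SA * weight_v (tdiag_of R) SB))"
    unfolding bracket_v_def ncr_tdiag_of_sum sum_Pow_lessThan_add
    by (simp del: tdiag_of.simps add: weights_TSum)
  also have "\<dots> = bracket_h T * bracket_v R + bracket_v T * bracket_h R + delta * (bracket_v T * bracket_v R)"
    unfolding bracket_h_def bracket_v_def sum_product by (simp only: sum.distrib sum_distrib_left)
  finally show ?thesis .
qed

lemma bracket_v_VSum: "bracket_v (VSum T R) = bracket_v T * bracket_v R"
  unfolding bracket_v_def ncr_tdiag_of_sum sum_Pow_lessThan_add
  by (simp del: tdiag_of.simps add: weights_VSum sum_product)

lemma bracket_h_VSum: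
  "bracket_h (VSum T R) = bracket_h T * bracket_v R + bracket_v T * bracket_h R + delta * (bracket_h T * bracket_h R)"
proof -
  have "bracket_h (VSum T R) = (\<Sum>SA\<in>Pow {..<ncr (tdiag_of T)}. \<Sum>SB\<in>Pow {..<ncr (tdiag_of R)}.
      weight_h (tdiag_of T) SA * weight_v (tdiag_of R) SB + weight_v (tdiag_of T) SA * weight_h (tdiag_of R) SB
      + delta * (weight_h (tdiag_of T) SA * weight_h (tdiag_of R) SB))"
    unfolding bracket_h_def ncr_tdiag_of_sum sum_Pow_lessThan_add
    by (simp del: tdiag_of.simps add: weights_VSum)
  also have "\<dots> = bracket_h T * bracket_v R + bracket_v T * bracket_h R + delta * (bracket_h T * bracket_h R)"
    unfolding bracket_h_def bracket_v_def sum_product by (simp only: sum.distrib sum_distrib_left)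
  finally show ?thesis .
qed

lemma brackets_One: "bracket_h One = fls_X_inv" "bracket_v One = 1"
proof -
  have "Pow {..<ncr (tdiag_of One)} = {{}, {0}}" by (auto simp: lessThan_Suc Pow_insert)
  moreover have "fls_X_intpow (-1) = (fls_X_inv :: int fls)"
    by (simp add: fls_X_inv_conv_shift_1)
  ultimately show "bracket_h One = fls_X_inv" "bracket_v One = 1"
    using state_One[of "{}"] state_One[of "{0}"]
    by (simp_all add: bracket_h_def bracket_v_def weight_h_def weight_v_def state_weight_def)
qed

section \<open>The numerator closure\<close>

definition bracket_numerator :: "ctangle \<Rightarrow> int fls" where
  "bracket_numerator T = delta * bracket_h T + bracket_v T"

text \<open>Closing with the NW--NE and SW--SE arcs leaves the components of a vertical state
  unchanged but merges the two boundary components of a horizontal one.\<close>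

lemma num_loops_numerator:
  "num_loops (numerator T) S =
     (if horizontal (tdiag_of T) S then state_ncomp (tdiag_of T) S else state_ncomp (tdiag_of T) S - 1)"
proof -
  let ?D = "tdiag_of T"
  let ?E = "state_edges ?D S"
  have w: "well_formed ?D" by (rule well_formed_tdiag_of)
  have paired: "paired_ends (conn ?E) (bnw ?D) (bne ?D) (bsw ?D) (bse ?D)"
    using state_paired_tdiag_of unfolding state_paired_def .
  have "snd (numerator T) \<union> (\<Union>i<fst (numerator T). smoothing S i)
      = insert (bsw ?D, bse ?D) (insert (bnw ?D, bne ?D) ?E)"
    unfolding numerator_def state_edges_def by (auto simp: Let_def)
  moreover have "A // r = (\<lambda>x. r `` {x}) ` A" for A :: "slot set" and r
    unfolding quotient_def by auto
  ultimately have "num_loops (numerator T) S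
      = ncomponents (slots (ncr ?D)) (insert (bsw ?D, bse ?D) (insert (bnw ?D, bne ?D) ?E))"
    unfolding num_loops_def by (simp add: numerator_def Let_def ncomponents_def slots_def conn_def)
  also have "\<dots> = ncomponents (slots (ncr ?D)) (insert (bnw ?D, bne ?D) ?E)"
    using paired conn_sym by (intro ncomponents_insert_connected)
      (auto simp: conn_insert paired_ends_def)
  also have "\<dots> = (if horizontal ?D S then state_ncomp ?D S else state_ncomp ?D S - 1)"
  proof (cases "horizontal ?D S")
    case True
    then show ?thesis unfolding horizontal_def state_ncomp_def by (simp add: ncomponents_insert_connected)
  next
    case False
    then have "ncomponents (slots (ncr ?D)) (insert (bnw ?D, bne ?D) ?E) + 1 = state_ncomp ?D S"
      unfolding state_ncomp_def horizontal_def using boundary_in_slots[OF w]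
      by (intro ncomponents_insert_disconnected) auto
    then show ?thesis using False by simp
  qed
  finally show ?thesis .
qed

lemma jones_numerator:
  "\<exists>\<epsilon>\<in>{1, -1}. \<exists>c. jones (numerator T) ori = \<epsilon> * fls_X_intpow c * bracket_numerator T"
proof -
  let ?w = "writhe (numerator T) ori"
  let ?c = "(3 * ?w + int (fst (numerator T))) div 2"
  have state_term: "fls_X_intpow (- int (card S)) * delta ^ (num_loops (numerator T) S - 1)
      = delta * weight_h (tdiag_of T) S + weight_v (tdiag_of T) S" for S
  proof (cases "horizontal (tdiag_of T) S")
    case True
    have "state_ncomp (tdiag_of T) S - 1 = Suc (state_ncomp (tdiag_of T) S - 2)"
      using state_ncomp_ge_2[of T S] by simp
    then show ?thesis using True
      by (simp add: num_loops_numerator weight_h_def weight_v_def state_weight_def mult_ac)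
  qed (simp add: num_loops_numerator weight_h_def weight_v_def state_weight_def numeral_2_eq_2)
  have "jones (numerator T) ori = (if even ?w then 1 else -1) * (\<Sum>S\<in>Pow {..<ncr (tdiag_of T)}.
      fls_X_intpow ?c * (fls_X_intpow (- int (card S)) * delta ^ (num_loops (numerator T) S - 1)))"
    unfolding jones_def Let_def delta_def fls_X_intpow_diff_conv_times
    by (simp add: numerator_def Let_def mult.assoc)
  also have "\<dots> = (if even ?w then 1 else -1) * fls_X_intpow ?c * bracket_numerator T"
  proof -
    have "(\<Sum>S\<in>Pow {..<ncr (tdiag_of T)}. delta * weight_h (tdiag_of T) S + weight_v (tdiag_of T) S)
        = bracket_numerator T"
      by (simp add: bracket_numerator_def bracket_h_def bracket_v_def sum.distrib sum_distrib_left)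
    then show ?thesis unfolding state_term sum_distrib_left[symmetric] by (simp add: mult.assoc)
  qed
  finally show ?thesis by (intro bexI[of _ "if even ?w then 1 else -1"] exI[of _ ?c]) auto
qed


section \<open>Laurent polynomials and congruence modulo \<open>I_t\<close>\<close>

unbundle fps_syntax

lemma laurent_poly_iff_eventually_zero: "laurent_poly f \<longleftrightarrow> (\<exists>M. \<forall>n>M. f $$ n = 0)"
proof
  assume "laurent_poly f"
  then have fin: "finite (insert 0 {i. f $$ i \<noteq> 0})" unfolding laurent_poly_def by simp
  have "f $$ n = 0" if "n > Max (insert 0 {i. f $$ i \<noteq> 0})" for n
    using Max_ge[OF fin, of n] that by (cases "f $$ n = 0") auto
  then show "\<exists>M. \<forall>n>M. f $$ n = 0" by blast
next
  assume "\<exists>M. \<forall>n>M. f $$ n = 0"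
  then obtain M where "\<forall>n>M. f $$ n = 0" by blast
  then have "{i. f $$ i \<noteq> 0} \<subseteq> {fls_subdegree f..M}"
    using fls_eq0_below_subdegree by (force simp: not_less)
  then show "laurent_poly f" unfolding laurent_poly_def by (rule finite_subset) simp
qed

lemma laurent_poly_shift_1: "laurent_poly (fls_shift c (1 :: int fls))"
  unfolding laurent_poly_iff_eventually_zero by (rule exI[of _ "- c"]) auto

lemma laurent_poly_0: "laurent_poly (0 :: int fls)"
  by (simp add: laurent_poly_def)

lemma laurent_poly_1: "laurent_poly (1 :: int fls)"
  using laurent_poly_shift_1[of 0] by simp

lemma laurent_poly_X: "laurent_poly (fls_X :: int fls)"
  unfolding laurent_poly_iff_eventually_zero by (rule exI[of _ 1]) auto

lemma laurent_poly_X_inv: "laurent_poly (fls_X_inv :: int fls)"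
  unfolding laurent_poly_iff_eventually_zero by (rule exI[of _ 0]) auto

lemma laurent_poly_add: "laurent_poly f \<Longrightarrow> laurent_poly g \<Longrightarrow> laurent_poly (f + g)"
  unfolding laurent_poly_iff_eventually_zero by (metis fls_plus_nth add_0 max.strict_boundedE)

lemma laurent_poly_uminus: "laurent_poly f \<Longrightarrow> laurent_poly (- f)"
  unfolding laurent_poly_def by simp

lemma laurent_poly_diff: "laurent_poly f \<Longrightarrow> laurent_poly g \<Longrightarrow> laurent_poly (f - g)"
  using laurent_poly_add[of f "- g"] laurent_poly_uminus[of g] by simp

lemma laurent_poly_mult:
  fixes f g :: "int fls"
  assumes "laurent_poly f" "laurent_poly g"
  shows "laurent_poly (f * g)"
proof -
  obtain M N where M: "\<forall>n>M. f $$ n = 0" and N: "\<forall>n>N. g $$ n = 0"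
    using assms unfolding laurent_poly_iff_eventually_zero by blast
  have "(f * g) $$ n = 0" if "n > M + N" for n
    unfolding fls_times_nth(2)
  proof (rule sum.neutral, intro ballI)
    fix i
    have "i > M \<or> n - i > N" using that by linarith
    then show "f $$ i * g $$ (n - i) = 0" using M N by auto
  qed
  then show ?thesis unfolding laurent_poly_iff_eventually_zero by blast
qed

lemma laurent_poly_power: "laurent_poly (f :: int fls) \<Longrightarrow> laurent_poly (f ^ n)"
  by (induction n) (simp_all add: laurent_poly_1 laurent_poly_mult)

lemma laurent_poly_sum:
  fixes F :: "'b \<Rightarrow> int fls"
  shows "(\<And>x. x \<in> A \<Longrightarrow> laurent_poly (F x)) \<Longrightarrow> laurent_poly (sum F A)"
  by (induction A rule: infinite_finite_induct) (simp_all add: laurent_poly_0 laurent_poly_add)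

lemmas laurent_poly_intros =
  laurent_poly_0 laurent_poly_1 laurent_poly_X laurent_poly_X_inv laurent_poly_shift_1
  laurent_poly_add laurent_poly_uminus laurent_poly_diff laurent_poly_mult laurent_poly_power

lemma laurent_poly_tvar: "laurent_poly tvar"
  unfolding tvar_def by (intro laurent_poly_intros)

lemma in_It_0: "in_It 0"
  unfolding in_It_def using laurent_poly_0 by auto

lemma in_It_phi10_mult: "laurent_poly h \<Longrightarrow> in_It (h * phi10)"
  unfolding in_It_def by blast

lemma in_It_add: "in_It f \<Longrightarrow> in_It g \<Longrightarrow> in_It (f + g)"
  unfolding in_It_def by (metis distrib_right laurent_poly_add)

lemma in_It_mult: "laurent_poly g \<Longrightarrow> in_It f \<Longrightarrow> in_It (g * f)"
  unfolding in_It_def by (metis laurent_poly_mult mult.assoc)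

lemma in_It_power_diff:
  assumes "laurent_poly f" "laurent_poly g" "in_It (f - g)"
  shows "in_It (f ^ n - g ^ n)"
proof (induction n)
  case (Suc n)
  have "f ^ Suc n - g ^ Suc n = f * (f ^ n - g ^ n) + g ^ n * (f - g)"
    by (simp add: algebra_simps)
  then show ?case
    using assms Suc by (simp add: in_It_add in_It_mult laurent_poly_power)
qed (simp add: in_It_0)

lemma laurent_poly_sign: "(\<epsilon> :: int fls) \<in> {1, -1} \<Longrightarrow> laurent_poly \<epsilon>"
  using laurent_poly_1 laurent_poly_uminus[OF laurent_poly_1] by auto

lemma doteq_trans:
  assumes "doteq f g" "doteq g h"
  shows "doteq f h"
proof -
  obtain \<epsilon> i \<epsilon>' j where \<epsilon>: "\<epsilon> \<in> {1, -1}" "\<epsilon>' \<in> {1, -1}"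
    and fg: "in_It (f - \<epsilon> * fls_X_intpow i * g)" and gh: "in_It (g - \<epsilon>' * fls_X_intpow j * h)"
    using assms unfolding doteq_def by blast
  have X: "fls_X_intpow i * fls_X_intpow j = (fls_X_intpow (i + j) :: int fls)"
    by (rule fls_X_intpow_times_fls_X_intpow)
  have eq: "f - (\<epsilon> * \<epsilon>') * fls_X_intpow (i + j) * h
      = (f - \<epsilon> * fls_X_intpow i * g) + (\<epsilon> * fls_X_intpow i) * (g - \<epsilon>' * fls_X_intpow j * h)"
    unfolding X[symmetric] by algebra
  have "laurent_poly (\<epsilon> * fls_X_intpow i)"
    using \<epsilon> by (intro laurent_poly_intros laurent_poly_sign)
  then have "in_It (f - (\<epsilon> * \<epsilon>') * fls_X_intpow (i + j) * h)"
    unfolding eq by (intro in_It_add in_It_mult fg gh)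
  moreover have "\<epsilon> * \<epsilon>' \<in> {1, -1}" using \<epsilon> by auto
  ultimately show ?thesis unfolding doteq_def by blast
qed

lemma doteq_unit_mult: "\<epsilon> \<in> {1, -1} \<Longrightarrow> doteq (\<epsilon> * fls_X_intpow i * f) f"
  unfolding doteq_def by (intro bexI[of _ \<epsilon>] exI[of _ i]) (simp_all add: in_It_0)


section \<open>The Montesinos links \<open>M_[k[2/5], m[1/2]]\<close>\<close>

lemma fls_X_times_X_inv: "(fls_X :: int fls) * fls_X_inv = 1"
proof -
  have "(fls_X :: int fls) * fls_X_inv = fls_X_intpow 1 * fls_X_intpow (-1)"
    by (simp add: fls_X_conv_shift_1 fls_X_inv_conv_shift_1)
  also have "\<dots> = 1" by (simp only: fls_X_intpow_times_fls_X_intpow) simp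
  finally show ?thesis .
qed

lemma brackets_rat_1_2:
  "bracket_h rat_1_2 = - (fls_X_inv ^ 3 * (1 - tvar))" "bracket_v rat_1_2 = 1"
  unfolding rat_1_2_def bracket_h_VSum bracket_v_VSum brackets_One
  using fls_X_times_X_inv unfolding delta_def tvar_def by (algebra, simp)

lemma brackets_rat_2_5:
  "bracket_numerator rat_2_5 = - (fls_X_inv ^ 7 * (1 + tvar ^ 2))"
  "bracket_h rat_2_5 + delta * bracket_v rat_2_5 = fls_X_inv ^ 6 * phi10"
  "bracket_h rat_2_5 = fls_X_inv ^ 2 * (1 - tvar ^ 2) + fls_X_inv ^ 6 * phi10"
  unfolding bracket_numerator_def rat_2_5_def
    bracket_h_VSum bracket_v_VSum bracket_h_TSum bracket_v_TSum brackets_One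
  using fls_X_times_X_inv unfolding delta_def tvar_def phi10_def by algebra+

lemma laurent_poly_bracket_v: "laurent_poly (bracket_v T)"
  unfolding bracket_v_def weight_v_def state_weight_def delta_def
  by (intro laurent_poly_sum) (simp add: laurent_poly_intros)

lemma bracket_h_tsum_list: "Ts \<noteq> [] \<Longrightarrow> bracket_h (tsum_list Ts) = prod_list (map bracket_h Ts)"
  by (induction Ts rule: tsum_list.induct) (simp_all add: bracket_h_TSum)

lemma bracket_numerator_tsum_list_Cons:
  "\<exists>B. laurent_poly B \<and> bracket_numerator (tsum_list (T # Ts)) =
     bracket_numerator T * prod_list (map bracket_h Ts) + (bracket_h T + delta * bracket_v T) * B"
proof (cases Ts)
  case Nil
  then show ?thesis using laurent_poly_0 by auto
next
  case (Cons R Rs)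
  then have "tsum_list (T # Ts) = TSum T (tsum_list Ts)" by simp
  moreover have "bracket_h (tsum_list Ts) = prod_list (map bracket_h Ts)"
    using Cons by (simp add: bracket_h_tsum_list)
  ultimately show ?thesis using laurent_poly_bracket_v
    by (intro exI[of _ "bracket_v (tsum_list Ts)"])
      (simp add: bracket_numerator_def bracket_h_TSum bracket_v_TSum algebra_simps)
qed

lemma fls_X_intpow_minus_nat: "fls_X_intpow (- int n) = (fls_X_inv ^ n :: int fls)"
  by (simp add: fls_X_inv_power_conv_shift_1)

lemma doteq_bracket_montesinos:
  assumes "k \<ge> 1"
  shows "doteq (bracket_numerator (tsum_list (replicate k rat_2_5 @ replicate m rat_1_2)))
           ((1 + tvar ^ 2) * (1 - tvar ^ 2) ^ (k - 1) * (1 - tvar) ^ m)"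
proof -
  define P where "P = bracket_h rat_2_5"
  define Q where "Q = bracket_h rat_1_2"
  define u where "u = fls_X_inv ^ 2 * (1 - tvar ^ 2)"
  have list: "replicate k rat_2_5 @ replicate m rat_1_2 = rat_2_5 # (replicate (k - 1) rat_2_5 @ replicate m rat_1_2)"
    using assms by (cases k) auto
  obtain B where B: "laurent_poly B"
    and N: "bracket_numerator (tsum_list (replicate k rat_2_5 @ replicate m rat_1_2)) =
      bracket_numerator rat_2_5 * (P ^ (k - 1) * Q ^ m) + fls_X_inv ^ 6 * phi10 * B"
    using bracket_numerator_tsum_list_Cons[of rat_2_5 "replicate (k - 1) rat_2_5 @ replicate m rat_1_2"]
    unfolding list brackets_rat_2_5(2) by (auto simp: P_def Q_def)
  have lp: "laurent_poly P" "laurent_poly u" "laurent_poly (bracket_numerator rat_2_5 * Q ^ m)"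
    unfolding P_def Q_def u_def brackets_rat_2_5 brackets_rat_1_2 phi10_def
    by (intro laurent_poly_intros laurent_poly_tvar)+
  \<comment> \<open>modulo \<open>I_t\<close> each \<open>[2/5]\<close> contributes \<open>u\<close>, so the bracket is a unit times the target\<close>
  have "in_It (P ^ (k - 1) - u ^ (k - 1))"
    using lp(1,2) by (rule in_It_power_diff)
      (simp add: P_def u_def brackets_rat_2_5(3) in_It_phi10_mult laurent_poly_intros)
  with lp(3) have "in_It (bracket_numerator rat_2_5 * Q ^ m * (P ^ (k - 1) - u ^ (k - 1)))"
    by (rule in_It_mult)
  moreover have "in_It (fls_X_inv ^ 6 * B * phi10)"
    using B by (intro in_It_phi10_mult laurent_poly_intros)
  ultimately have "in_It (bracket_numerator rat_2_5 * Q ^ m * (P ^ (k - 1) - u ^ (k - 1)) +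
      fls_X_inv ^ 6 * B * phi10)"
    by (rule in_It_add)
  moreover define J where "J = 7 + 2 * (k - 1) + 3 * m"
  define \<epsilon> where "\<epsilon> = - ((-1) ^ m :: int fls)"
  have unit: "bracket_numerator rat_2_5 * u ^ (k - 1) * Q ^ m = \<epsilon> * fls_X_intpow (- int J) *
      ((1 + tvar ^ 2) * (1 - tvar ^ 2) ^ (k - 1) * (1 - tvar) ^ m)"
  proof -
    have uk: "u ^ (k - 1) = fls_X_inv ^ (2 * (k - 1)) * (1 - tvar ^ 2) ^ (k - 1)"
      unfolding u_def by (simp add: power_mult_distrib power_mult)
    have Qm: "Q ^ m = (-1) ^ m * (fls_X_inv ^ (3 * m) * (1 - tvar) ^ m)"
      unfolding Q_def brackets_rat_1_2 by (subst power_minus) (simp add: power_mult_distrib power_mult)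
    have XJ: "fls_X_inv ^ J = fls_X_inv ^ 7 * fls_X_inv ^ (2 * (k - 1)) * fls_X_inv ^ (3 * m)"
      by (simp add: J_def power_add)
    show ?thesis
      unfolding fls_X_intpow_minus_nat brackets_rat_2_5(1) uk Qm XJ \<epsilon>_def by (simp add: mult_ac)
  qed
  ultimately have "in_It (bracket_numerator (tsum_list (replicate k rat_2_5 @ replicate m rat_1_2)) -
      \<epsilon> * fls_X_intpow (- int J) * ((1 + tvar ^ 2) * (1 - tvar ^ 2) ^ (k - 1) * (1 - tvar) ^ m))"
    unfolding N unit[symmetric] by (simp add: algebra_simps)
  moreover have "\<epsilon> \<in> {1, -1}"
    unfolding \<epsilon>_def by (cases "even m") auto
  ultimately show ?thesis unfolding doteq_def by blast
qed

lemma doteq_cyclotomic_factor: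
  assumes "laurent_poly f"
  shows "doteq ((1 + tvar ^ 2) * (1 - tvar) * f) f"
proof -
  have "fls_X_intpow 8 = (tvar ^ 4 :: int fls)"
    unfolding tvar_def power_mult[symmetric] by (simp add: fls_X_power_conv_shift_1)
  then have "(1 + tvar ^ 2) * (1 - tvar) * f - (-1) * fls_X_intpow 8 * f = f * phi10"
    unfolding phi10_def by algebra
  then show ?thesis
    unfolding doteq_def using in_It_phi10_mult[OF assms] by (intro bexI[of _ "-1"] exI[of _ 8]) auto
qed

theorem theorem5p7:
  fixes k m :: nat and ori :: "slot \<Rightarrow> bool"
  assumes "k \<ge> 1"
    and "is_orientation (montesinos_2_5_1_2 k m) ori"
  shows "doteq (jones (montesinos_2_5_1_2 k m) ori)
               ((1 + tvar ^ 2) * (1 - tvar ^ 2) ^ (k - 1) * (1 - tvar) ^ m)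
       \<and> (k + m \<ge> 2 \<longrightarrow>
          doteq (jones (montesinos_2_5_1_2 k m) ori)
                ((1 + tvar) ^ (k - 1) * (1 - tvar) ^ (k + m - 2)))"
proof -
  define T where "T = tsum_list (replicate k rat_2_5 @ replicate m rat_1_2)"
  obtain \<epsilon> c where "\<epsilon> \<in> {1, -1}" "jones (montesinos_2_5_1_2 k m) ori = \<epsilon> * fls_X_intpow c * bracket_numerator T"
    using jones_numerator[of T ori] unfolding montesinos_2_5_1_2_def T_def by blast
  then have "doteq (jones (montesinos_2_5_1_2 k m) ori) (bracket_numerator T)"
    by (simp add: doteq_unit_mult)
  then have part1: "doteq (jones (montesinos_2_5_1_2 k m) ori)
      ((1 + tvar ^ 2) * (1 - tvar ^ 2) ^ (k - 1) * (1 - tvar) ^ m)"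
    using doteq_bracket_montesinos[OF assms(1)] unfolding T_def by (rule doteq_trans)
  have "doteq ((1 + tvar ^ 2) * (1 - tvar ^ 2) ^ (k - 1) * (1 - tvar) ^ m)
      ((1 + tvar) ^ (k - 1) * (1 - tvar) ^ (k + m - 2))" if "k + m \<ge> 2"
  proof -
    have "k - 1 + m = Suc (k + m - 2)" using that assms(1) by simp
    then have pow: "(1 - tvar) ^ (k - 1) * (1 - tvar) ^ m = (1 - tvar) * (1 - tvar) ^ (k + m - 2)"
      by (simp flip: power_add)
    have "(1 - tvar ^ 2) ^ (k - 1) = (1 - tvar) ^ (k - 1) * (1 + tvar) ^ (k - 1)"
      by (simp add: power2_eq_square algebra_simps flip: power_mult_distrib)
    then have "(1 + tvar ^ 2) * (1 - tvar ^ 2) ^ (k - 1) * (1 - tvar) ^ m =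
        (1 + tvar ^ 2) * (1 + tvar) ^ (k - 1) * ((1 - tvar) ^ (k - 1) * (1 - tvar) ^ m)"
      by (simp only: mult_ac)
    also have "\<dots> = (1 + tvar ^ 2) * (1 - tvar) * ((1 + tvar) ^ (k - 1) * (1 - tvar) ^ (k + m - 2))"
      unfolding pow by (simp only: mult_ac)
    finally have factor: "(1 + tvar ^ 2) * (1 - tvar ^ 2) ^ (k - 1) * (1 - tvar) ^ m =
        (1 + tvar ^ 2) * (1 - tvar) * ((1 + tvar) ^ (k - 1) * (1 - tvar) ^ (k + m - 2))" .
    show ?thesis
      unfolding factor by (intro doteq_cyclotomic_factor laurent_poly_intros laurent_poly_tvar)
  qed
  with part1 show ?thesis using doteq_trans by blast
qed

end
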